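(* Let $q$ be an odd prime power, $d$ a positive integer, $\varphi_d$ the coloring defined below, and let $p\ge 2$ and $T \ge 0$ be integers. Let $S\subseteq(\mathbb{F}_q^* )^d$ be a set of $p$ vectors with a leftover structure under $\varphi_d$. If $T\ge 1$, suppose further that $a_1,\dots,a_T\in(\mathbb{F}_q^* )^d$ (distinct, and not in $S$) and $\alpha_1,\dots,\alpha_T\in C_d$ satisfy $\varphi_d(a_i,a_j) = \alpha_i$ for all $1\le i<j\le T$ and $\varphi_d(a_i,s) = \alpha_i$ for all $1 \le i\le T$ and all $s\in S$. Then there is a sequence of positive integers $x_1,\dots,x_t$ with $\sum_{i=1}^t x_i = p-1$ such that, writing $s_1 = 0$ and $s_i = \sum_{j=1}^{i-1} x_j$ for $i \ge 2$, for every $i=1,\dots,t$: (1) $1\le x_i \le \lfloor (p-s_i)/2\rfloor$; (2) $\lceil\log_2 x_i\rceil + \lceil \log_2(p-s_i-x_i)\rceil \le d-1$; (3) $\lceil \log_2(p-s_i-x_i)\rceil \le d - i - T$.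
   Context: $\mathbb{F}_q^*$ is the set of nonzero elements of $\mathbb{F}_q$, endowed with an arbitrary fixed linear order; $(\mathbb{F}_q^* )^d$ is ordered lexicographically with respect to it. Let $C_d = \mathrm{DOT} \sqcup \mathrm{ZERO}\sqcup\mathrm{UP}\sqcup\mathrm{DOWN}$, where $\mathrm{DOT} = \mathbb{F}_q^*$ and ZERO, UP, DOWN are three disjoint copies of $\{1,\dots,d\}\times \mathbb{F}_q$. For distinct $x<y$ in $(\mathbb{F}_q^* )^d$, let $i$ be the first coordinate where $x$ and $y$ differ, and $x\cdot y$ the standard dot product; $\varphi_d(x,y)=\varphi_d(y,x)$ is $(i,x_i+y_i)$ in ZERO if $x\cdot y=0$; $(i,x_i+y_i)$ in UP if $x\cdot y\ne 0$ and $x\cdot y=x\cdot x$; $(i,x_i+y_i)$ in DOWN if $x\cdot y\notin\{0,x\cdot x\}$ and $x\cdot y=y\cdot y$; and $x\cdot y\in\mathrm{DOT}$ otherwise. For a vertex set $A$, $\varphi_d(A)$ is the set of colors on pairs inside $A$. $S$ has a leftover structure under $\varphi_d$ if $|S|=1$, or $S$ has a partition $S=A\cup B$ into nonempty sets such that $A$ and $B$ each have a leftover structure, $\varphi_d(A)\cap\varphi_d(B)=\emptyset$, and there is a color $\gamma$ with $\varphi_d(a,b)=\gamma$ for all $a\in A$, $b\in B$ and $\gamma\notin\varphi_d(A)\cup\varphi_d(B)$. *)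

theory Defs
  imports Complex_Main
begin

text \<open>The linear order on F_q^* is a parameter R (a reflexive linear order relation on the
  nonzero elements); (F_q^*)^d is ordered lexicographically with respect to it.\<close>

definition vecs :: "nat \<Rightarrow> 'a::field list set" where
  "vecs d = {x. length x = d \<and> 0 \<notin> set x}"

definition dotp :: "'a::field list \<Rightarrow> 'a list \<Rightarrow> 'a" where
  "dotp x y = (\<Sum>k<length x. x ! k * y ! k)"

text \<open>First (0-based) index where x and y differ.\<close>
definition first_diff :: "'a list \<Rightarrow> 'a list \<Rightarrow> nat" where
  "first_diff x y = (LEAST k. x ! k \<noteq> y ! k)"

definition lexless :: "'a rel \<Rightarrow> 'a list \<Rightarrow> 'a list \<Rightarrow> bool" where
  "lexless R x y \<longleftrightarrow> x \<noteq> y \<and>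
     (x ! first_diff x y, y ! first_diff x y) \<in> R"

text \<open>The colour set C_d: DOT = F_q^*, and ZERO, UP, DOWN copies of {1..d} x F_q
  (coordinates are stored 1-based).\<close>
datatype 'a color = DOT 'a | ZERO nat 'a | UP nat 'a | DOWN nat 'a

definition col_ord :: "'a::field list \<Rightarrow> 'a list \<Rightarrow> 'a color" where
  "col_ord x y = (let i = first_diff x y; c = x ! i + y ! i in
     if dotp x y = 0 then ZERO (Suc i) c
     else if dotp x y = dotp x x then UP (Suc i) c
     else if dotp x y = dotp y y then DOWN (Suc i) c
     else DOT (dotp x y))"

definition phi :: "'a::field rel \<Rightarrow> 'a list \<Rightarrow> 'a list \<Rightarrow> 'a color" where
  "phi R x y = (if lexless R x y then col_ord x y else col_ord y x)"

definition colors :: "'a::field rel \<Rightarrow> 'a list set \<Rightarrow> 'a color set" where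
  "colors R A = {phi R x y | x y. x \<in> A \<and> y \<in> A \<and> x \<noteq> y}"

inductive leftover :: "'a::field rel \<Rightarrow> 'a list set \<Rightarrow> bool" for R where
  single: "card S = 1 \<Longrightarrow> leftover R S"
| split: "\<lbrakk> S = A \<union> B; A \<inter> B = {}; A \<noteq> {}; B \<noteq> {};
            leftover R A; leftover R B; colors R A \<inter> colors R B = {};
            \<forall>a\<in>A. \<forall>b\<in>B. phi R a b = \<gamma>;
            \<gamma> \<notin> colors R A \<union> colors R B \<rbrakk> \<Longrightarrow> leftover R S"

end

theory Submission
  imports Defs
begin

(* Split S at the root of its leftover structure into A and B with |A| <= |B|, take x_1 = |A|,
   append a vertex of A to a_1, ..., a_T (each of these sees a single color on everything after
   it, B included) and recurse into B.  Two facts from linear algebra over F_q give the bounds.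

   A list v_0, ..., v_k in which each v_j sees a single color on all later entries is triangular:
   the color class of v_j is cut out by an affine equation (x . v_j = c for DOT, a fixed value in
   a fixed coordinate otherwise) which v_j itself violates, so the differences v_j - v_k are
   independent and k <= d.  Following the larger part of each split, a leftover set of size n
   contains such a list of length at least log2 n + 1; placed behind the T + i pinned vertices it
   gives (3).

   For the monochromatic pair (A, B) the color makes the differences inside one part orthogonal
   to the other part, and that part lies on an affine hyperplane missing the origin, so its points
   are independent.  Independent families in orthogonal position have at most d members in total,
   which gives (2). *)

section \<open>Orthogonal independent families\<close>

definition dotn :: "nat \<Rightarrow> (nat \<Rightarrow> 'a::field) \<Rightarrow> (nat \<Rightarrow> 'a) \<Rightarrow> 'a" where
  "dotn n u w = (\<Sum>i<n. u i * w i)"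

definition supp_below :: "nat \<Rightarrow> (nat \<Rightarrow> 'a::zero) \<Rightarrow> bool" where
  "supp_below n u \<longleftrightarrow> (\<forall>i\<ge>n. u i = 0)"

definition lin_indep :: "'i set \<Rightarrow> ('i \<Rightarrow> nat \<Rightarrow> 'a::field) \<Rightarrow> bool" where
  "lin_indep I us \<longleftrightarrow> (\<forall>c. (\<forall>i. (\<Sum>j\<in>I. c j * us j i) = 0) \<longrightarrow> (\<forall>j\<in>I. c j = 0))"

lemma dotn_comm: "dotn n u w = dotn n w u"
  unfolding dotn_def by (simp add: mult.commute)

lemma dotn_sum_right: "dotn n g (\<lambda>i. \<Sum>m\<in>M. c m * v m i) = (\<Sum>m\<in>M. c m * dotn n g (v m))"
  unfolding dotn_def sum_distrib_left by (subst sum.swap) (simp add: mult.left_commute)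

lemma dotn_diff_right: "dotn n g (\<lambda>i. u i - w i) = dotn n g u - dotn n g w"
  unfolding dotn_def by (simp add: right_diff_distrib sum_subtractf)

lemma dotn_unit_left: "k < n \<Longrightarrow> dotn n (\<lambda>i. if i = k then 1 else 0) u = u k"
  unfolding dotn_def by (simp add: if_distrib[where f="\<lambda>z. z * _"] cong: if_cong)

lemma supp_below_diff:
  fixes u w :: "nat \<Rightarrow> 'a::group_add"
  shows "supp_below n u \<Longrightarrow> supp_below n w \<Longrightarrow> supp_below n (\<lambda>i. u i - w i)"
  unfolding supp_below_def by simp

lemma supp_below_SucD: "supp_below (Suc n) u \<Longrightarrow> u n = 0 \<Longrightarrow> supp_below n u"
  unfolding supp_below_def by (metis le_antisym not_less_eq_eq)

lemma lin_indep_empty [simp]: "lin_indep {} us"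
  unfolding lin_indep_def by simp

lemma lin_indep_zero_family:
  fixes us :: "'i \<Rightarrow> nat \<Rightarrow> 'a::field"
  assumes "lin_indep I us" "\<forall>j\<in>I. \<forall>i. us j i = 0"
  shows "I = {}"
proof (rule ccontr)
  assume "I \<noteq> {}"
  then obtain j where "j \<in> I" by blast
  have "(\<forall>i. (\<Sum>j\<in>I. (\<lambda>_. 1) j * us j i) = 0) \<longrightarrow> (\<forall>j\<in>I. (\<lambda>_. 1::'a) j = 0)"
    using assms(1) unfolding lin_indep_def by (rule spec)
  then have "\<forall>j\<in>I. (1::'a) = 0" using assms(2) by simp
  with \<open>j \<in> I\<close> show False by simp
qed

lemma lin_indep_subtract_multiples:
  assumes indep: "lin_indep I us" and "finite I" "a0 \<in> I"
  shows "lin_indep (I - {a0}) (\<lambda>a i. us a i - r a * us a0 i)"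
  unfolding lin_indep_def
proof (intro allI impI)
  fix c assume comb: "\<forall>i. (\<Sum>j\<in>I - {a0}. c j * (us j i - r j * us a0 i)) = 0"
  define c' where "c' = c(a0 := - (\<Sum>j\<in>I - {a0}. c j * r j))"
  have "(\<Sum>j\<in>I. c' j * us j i) = 0" for i
  proof -
    have "(\<Sum>j\<in>I. c' j * us j i) = c' a0 * us a0 i + (\<Sum>j\<in>I - {a0}. c' j * us j i)"
      using assms(2,3) by (rule sum.remove)
    also have "(\<Sum>j\<in>I - {a0}. c' j * us j i) = (\<Sum>j\<in>I - {a0}. c j * us j i)"
      by (rule sum.cong) (auto simp: c'_def)
    also have "c' a0 * us a0 i = - (\<Sum>j\<in>I - {a0}. c j * (r j * us a0 i))"
      by (simp add: c'_def sum_distrib_right mult.assoc)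
    also have "- (\<Sum>j\<in>I - {a0}. c j * (r j * us a0 i)) + (\<Sum>j\<in>I - {a0}. c j * us j i)
        = (\<Sum>j\<in>I - {a0}. c j * (us j i - r j * us a0 i))"
      by (simp add: right_diff_distrib sum_subtractf)
    finally show ?thesis using comb by simp
  qed
  then have "\<forall>j\<in>I. c' j = 0" using indep unfolding lin_indep_def by blast
  show "\<forall>j\<in>I - {a0}. c j = 0"
  proof
    fix j assume "j \<in> I - {a0}"
    with \<open>\<forall>j\<in>I. c' j = 0\<close> have "c' j = 0" by blast
    with \<open>j \<in> I - {a0}\<close> show "c j = 0" by (simp add: c'_def)
  qed
qed

lemma lin_indep_truncate:
  assumes indep: "lin_indep J ws" and supp: "\<forall>b\<in>J. supp_below (Suc n) (ws b)"
    and orth: "\<forall>b\<in>J. dotn (Suc n) u (ws b) = 0" and "u n \<noteq> 0"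
  shows "lin_indep J (\<lambda>b i. if i < n then ws b i else 0)"
  unfolding lin_indep_def
proof (intro allI impI)
  fix c assume comb: "\<forall>i. (\<Sum>j\<in>J. c j * (if i < n then ws j i else 0)) = 0"
  define w where "w = (\<lambda>i. \<Sum>j\<in>J. c j * ws j i)"
  have w_other: "w i = 0" if "i \<noteq> n" for i
  proof (cases "i < n")
    case True
    then show ?thesis using comb[rule_format, of i] by (simp add: w_def)
  next
    case False
    with that have "Suc n \<le> i" by simp
    then show ?thesis using supp by (simp add: w_def supp_below_def)
  qed
  have "u n * w n = dotn (Suc n) u w"
    using w_other by (simp add: dotn_def)
  also have "\<dots> = 0"
    using orth by (simp add: w_def dotn_sum_right)
  finally have "w n = 0" using \<open>u n \<noteq> 0\<close> by simp
  with w_other have "\<forall>i. w i = 0" by metis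
  then show "\<forall>j\<in>J. c j = 0" using indep unfolding lin_indep_def w_def by blast
qed

definition orth_indep ::
    "nat \<Rightarrow> 'i set \<Rightarrow> ('i \<Rightarrow> nat \<Rightarrow> 'a::field) \<Rightarrow> 'j set \<Rightarrow> ('j \<Rightarrow> nat \<Rightarrow> 'a) \<Rightarrow> bool" where
  "orth_indep n I us J ws \<longleftrightarrow> finite I \<and> finite J \<and>
     (\<forall>a\<in>I. supp_below n (us a)) \<and> (\<forall>b\<in>J. supp_below n (ws b)) \<and>
     lin_indep I us \<and> lin_indep J ws \<and> (\<forall>a\<in>I. \<forall>b\<in>J. dotn n (us a) (ws b) = 0)"

lemma orth_indep_swap: "orth_indep n I us J ws \<Longrightarrow> orth_indep n J ws I us"
  unfolding orth_indep_def by (auto simp: dotn_comm)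

lemma orth_indep_eliminate:
  fixes us :: "'i \<Rightarrow> nat \<Rightarrow> 'a::field" and ws :: "'j \<Rightarrow> nat \<Rightarrow> 'a"
  assumes oi: "orth_indep (Suc n) I us J ws" and "a0 \<in> I" "us a0 n \<noteq> 0"
  shows "\<exists>(us' :: 'i \<Rightarrow> nat \<Rightarrow> 'a) (ws' :: 'j \<Rightarrow> nat \<Rightarrow> 'a). orth_indep n (I - {a0}) us' J ws'"
proof -
  define u0 where "u0 = us a0"
  define us' where "us' = (\<lambda>a i. us a i - us a n / u0 n * u0 i)"
  define ws' where "ws' = (\<lambda>b i. if i < n then ws b i else 0)"
  have u0n: "u0 n \<noteq> 0" using assms(3) by (simp add: u0_def)
  have "orth_indep n (I - {a0}) us' J ws'"
    unfolding orth_indep_def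
  proof (intro conjI)
    show "\<forall>a\<in>I - {a0}. supp_below n (us' a)"
    proof
      fix a assume "a \<in> I - {a0}"
      with oi \<open>a0 \<in> I\<close> have "supp_below (Suc n) (us' a)"
        by (auto simp: orth_indep_def supp_below_def us'_def u0_def)
      moreover have "us' a n = 0" using u0n by (simp add: us'_def)
      ultimately show "supp_below n (us' a)" by (rule supp_below_SucD)
    qed
    show "lin_indep (I - {a0}) us'"
      unfolding us'_def u0_def using oi \<open>a0 \<in> I\<close>
      by (intro lin_indep_subtract_multiples) (auto simp: orth_indep_def)
    show "lin_indep J ws'"
      unfolding ws'_def using oi u0n \<open>a0 \<in> I\<close>
      by (intro lin_indep_truncate[where u=u0]) (auto simp: orth_indep_def u0_def)
    show "\<forall>a\<in>I - {a0}. \<forall>b\<in>J. dotn n (us' a) (ws' b) = 0"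
    proof (intro ballI)
      fix a b assume "a \<in> I - {a0}" "b \<in> J"
      have "us' a n = 0" using u0n by (simp add: us'_def)
      then have "dotn n (us' a) (ws' b) = dotn (Suc n) (us' a) (ws b)"
        by (simp add: dotn_def ws'_def)
      also have "\<dots> = dotn (Suc n) (us a) (ws b) - us a n / u0 n * dotn (Suc n) u0 (ws b)"
        by (simp add: dotn_def us'_def sum_subtractf sum_distrib_left algebra_simps)
      also have "\<dots> = 0"
        using oi \<open>a \<in> I - {a0}\<close> \<open>b \<in> J\<close> \<open>a0 \<in> I\<close> by (simp add: orth_indep_def u0_def)
      finally show "dotn n (us' a) (ws' b) = 0" .
    qed
  qed (use oi in \<open>auto simp: orth_indep_def supp_below_def ws'_def\<close>)
  then show ?thesis by blast
qed

lemma orth_indep_eliminate_right: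
  fixes us :: "'i \<Rightarrow> nat \<Rightarrow> 'a::field" and ws :: "'j \<Rightarrow> nat \<Rightarrow> 'a"
  assumes "orth_indep (Suc n) I us J ws" "b0 \<in> J" "ws b0 n \<noteq> 0"
  shows "\<exists>(us' :: 'i \<Rightarrow> nat \<Rightarrow> 'a) (ws' :: 'j \<Rightarrow> nat \<Rightarrow> 'a). orth_indep n I us' (J - {b0}) ws'"
proof -
  obtain ws' us' where "orth_indep n (J - {b0}) (ws' :: 'j \<Rightarrow> nat \<Rightarrow> 'a) I (us' :: 'i \<Rightarrow> nat \<Rightarrow> 'a)"
    using orth_indep_eliminate[OF orth_indep_swap[OF assms(1)] assms(2,3)] by blast
  then show ?thesis by (blast dest: orth_indep_swap)
qed

lemma orth_indep_restrict:
  assumes "orth_indep (Suc n) I us J ws" "\<forall>a\<in>I. us a n = 0" "\<forall>b\<in>J. ws b n = 0"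
  shows "orth_indep n I us J ws"
  using assms unfolding orth_indep_def by (simp add: dotn_def supp_below_SucD)

lemma orth_indep_card_le:
  fixes us :: "'i \<Rightarrow> nat \<Rightarrow> 'a::field" and ws :: "'j \<Rightarrow> nat \<Rightarrow> 'a"
  shows "orth_indep n I us J ws \<Longrightarrow> card I + card J \<le> n"
proof (induction n arbitrary: I J us ws)
  case 0
  then have "lin_indep I us" "\<forall>a\<in>I. \<forall>i. us a i = 0"
    by (simp_all add: orth_indep_def supp_below_def)
  then have "I = {}" by (rule lin_indep_zero_family)
  from 0 have "lin_indep J ws" "\<forall>b\<in>J. \<forall>i. ws b i = 0"
    by (simp_all add: orth_indep_def supp_below_def)
  then have "J = {}" by (rule lin_indep_zero_family)
  with \<open>I = {}\<close> show ?case by simp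
next
  case (Suc n)
  show ?case
  proof (cases "\<exists>a0\<in>I. us a0 n \<noteq> 0")
    case True
    then obtain a0 us' ws' where "a0 \<in> I" "orth_indep n (I - {a0}) (us' :: 'i \<Rightarrow> nat \<Rightarrow> 'a) J ws'"
      using orth_indep_eliminate[OF Suc.prems] by blast
    with Suc.IH have "card (I - {a0}) + card J \<le> n" by blast
    moreover have "Suc (card (I - {a0})) = card I"
      using Suc.prems \<open>a0 \<in> I\<close> by (intro card_Suc_Diff1) (simp_all add: orth_indep_def)
    ultimately show ?thesis by simp
  next
    case noI: False
    show ?thesis
    proof (cases "\<exists>b0\<in>J. ws b0 n \<noteq> 0")
      case True
      then obtain b0 us' ws' where "b0 \<in> J" "orth_indep n I (us' :: 'i \<Rightarrow> nat \<Rightarrow> 'a) (J - {b0}) ws'"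
        using orth_indep_eliminate_right[OF Suc.prems] by blast
      with Suc.IH have "card I + card (J - {b0}) \<le> n" by blast
      moreover have "Suc (card (J - {b0})) = card J"
        using Suc.prems \<open>b0 \<in> J\<close> by (intro card_Suc_Diff1) (simp_all add: orth_indep_def)
      ultimately show ?thesis by simp
    next
      case False
      have "orth_indep n I us J ws"
        using Suc.prems by (rule orth_indep_restrict) (use noI False in auto)
      with Suc.IH have "card I + card J \<le> n" .
      then show ?thesis by simp
    qed
  qed
qed

section \<open>Colors and affine functionals\<close>

definition vec_of :: "'a::zero list \<Rightarrow> nat \<Rightarrow> 'a" where
  "vec_of x i = (if i < length x then x ! i else 0)"

lemma supp_below_vec_of: "supp_below (length x) (vec_of x)"
  by (simp add: supp_below_def vec_of_def)

lemma dotp_conv_dotn: "length x = d \<Longrightarrow> length y = d \<Longrightarrow> dotp x y = dotn d (vec_of x) (vec_of y)"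
  unfolding dotp_def dotn_def vec_of_def by (intro sum.cong) auto

lemma dotp_comm: "length x = length y \<Longrightarrow> dotp x y = dotp y x"
  unfolding dotp_def by (simp add: mult.commute)

lemma first_diff_comm: "first_diff x y = first_diff y x"
  unfolding first_diff_def by metis

lemma first_diff_less:
  assumes "length x = length y" "x \<noteq> y"
  shows "first_diff x y < length x" "x ! first_diff x y \<noteq> y ! first_diff x y"
proof -
  obtain k where k: "k < length x" "x ! k \<noteq> y ! k"
    using assms nth_equalityI by blast
  then show "x ! first_diff x y \<noteq> y ! first_diff x y"
    unfolding first_diff_def by (metis (mono_tags) LeastI)
  have "first_diff x y \<le> k"
    unfolding first_diff_def using k(2) by (rule Least_le)
  with k(1) show "first_diff x y < length x" by simp
qed

lemma phi_sym:
  assumes R: "linear_order_on (UNIV - {0}) R"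
    and "x \<in> vecs d" "y \<in> vecs d" "x \<noteq> y"
  shows "phi R x y = phi R y x"
proof -
  define k where "k = first_diff x y"
  have len: "length x = d" "length y = d" and nz: "0 \<notin> set x" "0 \<notin> set y"
    using assms(2,3) by (auto simp: vecs_def)
  with assms(4) have k: "k < d" "x ! k \<noteq> y ! k"
    using first_diff_less[of x y] by (auto simp: k_def)
  with len nz have "x ! k \<noteq> 0" "y ! k \<noteq> 0" by (metis nth_mem)+
  with R k have "(x ! k, y ! k) \<in> R \<longleftrightarrow> (y ! k, x ! k) \<notin> R"
    unfolding linear_order_on_def partial_order_on_def total_on_def antisym_def by blast
  then have "lexless R x y \<longleftrightarrow> \<not> lexless R y x"
    using assms(4) first_diff_comm[of x y] by (auto simp: lexless_def k_def)
  then show ?thesis unfolding phi_def by auto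
qed

fun color_pos :: "'a color \<Rightarrow> nat" where
  "color_pos (DOT v) = 0"
| "color_pos (ZERO i c) = i"
| "color_pos (UP i c) = i"
| "color_pos (DOWN i c) = i"

fun color_sum :: "'a color \<Rightarrow> 'a" where
  "color_sum (DOT v) = v"
| "color_sum (ZERO i c) = c"
| "color_sum (UP i c) = c"
| "color_sum (DOWN i c) = c"

lemma col_ord_dotp:
  "col_ord x y = ZERO i c \<Longrightarrow> dotp x y = 0"
  "col_ord x y = UP i c \<Longrightarrow> dotp x y = dotp x x"
  "col_ord x y = DOWN i c \<Longrightarrow> dotp x y = dotp y y"
  by (auto simp: col_ord_def Let_def split: if_splits)

lemma col_ord_DOT:
  "col_ord x y = DOT v \<Longrightarrow> dotp x y = v \<and> v \<noteq> 0 \<and> v \<noteq> dotp x x \<and> v \<noteq> dotp y y"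
  by (auto simp: col_ord_def Let_def split: if_splits)

lemma col_ord_not_DOT:
  "col_ord x y \<notin> range DOT \<Longrightarrow> color_pos (col_ord x y) = Suc (first_diff x y) \<and>
     color_sum (col_ord x y) = x ! first_diff x y + y ! first_diff x y"
  by (auto simp: col_ord_def Let_def split: if_splits)

lemma phi_DOT:
  assumes "length x = length y" "phi R x y = DOT v"
  shows "dotp x y = v \<and> v \<noteq> 0 \<and> v \<noteq> dotp x x \<and> v \<noteq> dotp y y"
  using assms col_ord_DOT[of x y v] col_ord_DOT[of y x v] dotp_comm[OF assms(1)]
  by (auto simp: phi_def split: if_splits)

lemma phi_not_DOT:
  assumes "length x = length y" "phi R x y \<notin> range DOT"
  shows "color_pos (phi R x y) = Suc (first_diff x y) \<and>
     color_sum (phi R x y) = x ! first_diff x y + y ! first_diff x y"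
  using assms col_ord_not_DOT[of x y] col_ord_not_DOT[of y x] first_diff_comm[of x y]
  by (auto simp: phi_def add.commute split: if_splits)

lemma cross_color_coordinate:
  assumes V: "A \<union> B \<subseteq> vecs d" and "A \<inter> B = {}" "a0 \<in> A" "b0 \<in> B"
    and col: "\<forall>a\<in>A. \<forall>b\<in>B. phi R a b = \<gamma>" and "\<gamma> \<notin> range DOT"
  obtains k where "k < d" "\<forall>a\<in>A. \<forall>b\<in>B. first_diff a b = k"
    "\<forall>a\<in>A. a ! k = a0 ! k" "\<forall>b\<in>B. b ! k = b0 ! k" "a0 ! k \<noteq> b0 ! k" "a0 ! k \<noteq> 0" "b0 ! k \<noteq> 0"
proof -
  define k where "k = first_diff a0 b0"
  have len: "\<forall>x\<in>A \<union> B. length x = d \<and> 0 \<notin> set x" using V by (auto simp: vecs_def)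
  have pos_sum: "first_diff a b = k \<and> a ! k + b ! k = a0 ! k + b0 ! k" if "a \<in> A" "b \<in> B" for a b
    using phi_not_DOT[of a b R] phi_not_DOT[of a0 b0 R] col len that assms(3-6)
    by (auto simp: k_def)
  have "a0 \<noteq> b0" using assms(2-4) by blast
  then have k: "k < d" "a0 ! k \<noteq> b0 ! k"
    using first_diff_less[of a0 b0] len assms(3,4) by (auto simp: k_def)
  moreover have "a0 ! k \<noteq> 0" "b0 ! k \<noteq> 0"
    using len assms(3,4) k(1) by (metis UnCI nth_mem)+
  moreover have "\<forall>a\<in>A. a ! k = a0 ! k" using pos_sum assms(4) by force
  moreover have "\<forall>b\<in>B. b ! k = b0 ! k" using pos_sum assms(3) by force
  ultimately show ?thesis using pos_sum that by blast
qed

lemma separating_functional: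
  assumes "x \<in> vecs d" "Y \<subseteq> vecs d" "x \<notin> Y" and col: "\<forall>y\<in>Y. phi R x y = \<gamma>"
  shows "\<exists>g \<beta>. (\<forall>y\<in>Y. dotn d g (vec_of y) = \<beta>) \<and> dotn d g (vec_of x) \<noteq> \<beta>"
proof (cases "Y = {}")
  case True
  then show ?thesis by (intro exI[of _ "\<lambda>_. 0"] exI[of _ 1]) (simp add: dotn_def)
next
  case False
  then obtain y0 where "y0 \<in> Y" by blast
  have len: "length x = d" "\<forall>y\<in>Y. length y = d" using assms(1,2) by (auto simp: vecs_def)
  show ?thesis
  proof (cases "\<gamma> \<in> range DOT")
    case True
    then obtain v where "\<gamma> = DOT v" by blast
    have "dotp x y = v \<and> v \<noteq> dotp x x" if "y \<in> Y" for y
      using phi_DOT[of x y R v] col len that \<open>\<gamma> = DOT v\<close> by auto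
    then have "\<forall>y\<in>Y. dotp x y = v" "dotp x x \<noteq> v" using \<open>y0 \<in> Y\<close> by auto
    then show ?thesis
      using len by (intro exI[of _ "vec_of x"] exI[of _ v]) (simp add: dotp_conv_dotn)
  next
    case False
    have V: "{x} \<union> Y \<subseteq> vecs d" and D: "{x} \<inter> Y = {}" using assms by auto
    have C: "\<forall>a\<in>{x}. \<forall>y\<in>Y. phi R a y = \<gamma>" using col by simp
    obtain k where "k < d" "\<forall>y\<in>Y. y ! k = y0 ! k" "x ! k \<noteq> y0 ! k"
      by (rule cross_color_coordinate[OF V D _ \<open>y0 \<in> Y\<close> C False]) auto
    then show ?thesis
      using len by (intro exI[of _ "\<lambda>i. if i = k then 1 else 0"] exI[of _ "y0 ! k"])
        (simp add: dotn_unit_left vec_of_def)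
  qed
qed

definition diffs_orthogonal :: "'a::field list set \<Rightarrow> 'a list set \<Rightarrow> bool" where
  "diffs_orthogonal X Y \<longleftrightarrow> (\<forall>x\<in>X. \<forall>x'\<in>X. \<forall>y\<in>Y. dotp x y = dotp x' y)"

definition in_hyperplane_off_origin :: "nat \<Rightarrow> 'a::field list set \<Rightarrow> bool" where
  "in_hyperplane_off_origin d Y \<longleftrightarrow> (\<exists>h b. b \<noteq> 0 \<and> (\<forall>y\<in>Y. dotn d h (vec_of y) = b))"

lemma diffs_orthogonal_dotn:
  assumes "diffs_orthogonal X Y" "X \<union> Y \<subseteq> vecs d" "x \<in> X" "x' \<in> X" "y \<in> Y"
  shows "dotn d (\<lambda>i. vec_of x i - vec_of x' i) (vec_of y) = 0"
proof -
  have "length x = d" "length x' = d" "length y = d" using assms(2-5) by (auto simp: vecs_def)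
  then have "dotn d (\<lambda>i. vec_of x i - vec_of x' i) (vec_of y) = dotp x y - dotp x' y"
    by (simp add: dotn_comm[of d _ "vec_of y"] dotn_diff_right dotp_conv_dotn dotp_comm)
  moreover have "dotp x y = dotp x' y"
    using assms(1,3-5) unfolding diffs_orthogonal_def by blast
  ultimately show ?thesis by simp
qed

lemma diffs_orthogonal_mono:
  "diffs_orthogonal X Y \<Longrightarrow> X' \<subseteq> X \<Longrightarrow> Y' \<subseteq> Y \<Longrightarrow> diffs_orthogonal X' Y'"
  unfolding diffs_orthogonal_def by blast

lemma in_hyperplane_off_origin_mono:
  "in_hyperplane_off_origin d Y \<Longrightarrow> Y' \<subseteq> Y \<Longrightarrow> in_hyperplane_off_origin d Y'"
  unfolding in_hyperplane_off_origin_def by blast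

lemma in_hyperplane_off_origin_empty: "in_hyperplane_off_origin d {}"
  unfolding in_hyperplane_off_origin_def by (intro exI[of _ "\<lambda>_. 0"] exI[of _ 1]) simp

lemma in_hyperplane_off_origin_coordinate:
  assumes "k < d" "c \<noteq> 0" "\<forall>y\<in>Y. length y = d \<and> y ! k = c"
  shows "in_hyperplane_off_origin d Y"
  unfolding in_hyperplane_off_origin_def
  using assms by (intro exI[of _ "\<lambda>i. if i = k then 1 else 0"] exI[of _ c])
    (simp add: dotn_unit_left vec_of_def)

lemma col_ord_cross_orthogonal:
  assumes "S \<union> L \<subseteq> vecs d" "\<forall>s\<in>S. \<forall>l\<in>L. col_ord s l = \<gamma>" "\<gamma> \<notin> range DOT"
  shows "diffs_orthogonal S L \<or> diffs_orthogonal L S"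
proof -
  have comm: "dotp l s = dotp s l" if "s \<in> S" "l \<in> L" for s l
    using assms(1) that by (intro dotp_comm) (auto simp: vecs_def)
  show ?thesis
  proof (cases \<gamma>)
    case (ZERO i c)
    then have "\<forall>s\<in>S. \<forall>l\<in>L. dotp s l = 0" using assms(2) col_ord_dotp(1) by blast
    then have "diffs_orthogonal S L" by (simp add: diffs_orthogonal_def)
    then show ?thesis ..
  next
    case (UP i c)
    then have "\<forall>s\<in>S. \<forall>l\<in>L. dotp l s = dotp s s" using assms(2) col_ord_dotp(2) comm by metis
    then have "diffs_orthogonal L S" by (simp add: diffs_orthogonal_def)
    then show ?thesis ..
  next
    case (DOWN i c)
    then have "\<forall>s\<in>S. \<forall>l\<in>L. dotp s l = dotp l l" using assms(2) col_ord_dotp(3) by blast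
    then have "diffs_orthogonal S L" by (simp add: diffs_orthogonal_def)
    then show ?thesis ..
  qed (use assms(3) in auto)
qed

lemma phi_cross_orthogonal:
  assumes V: "A \<union> B \<subseteq> vecs d" and "A \<inter> B = {}" "a0 \<in> A" "b0 \<in> B"
    and col: "\<forall>a\<in>A. \<forall>b\<in>B. phi R a b = \<gamma>" and "\<gamma> \<notin> range DOT"
  shows "diffs_orthogonal A B \<or> diffs_orthogonal B A"
proof -
  obtain k where k: "\<forall>a\<in>A. \<forall>b\<in>B. first_diff a b = k"
    "\<forall>a\<in>A. a ! k = a0 ! k" "\<forall>b\<in>B. b ! k = b0 ! k"
    by (rule cross_color_coordinate[OF assms]) blast
  then have "lexless R a b \<longleftrightarrow> (a0 ! k, b0 ! k) \<in> R" if "a \<in> A" "b \<in> B" for a b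
    using that assms(2) by (auto simp: lexless_def)
  then have "(\<forall>a\<in>A. \<forall>b\<in>B. col_ord a b = \<gamma>) \<or> (\<forall>b\<in>B. \<forall>a\<in>A. col_ord b a = \<gamma>)"
    using col by (cases "(a0 ! k, b0 ! k) \<in> R") (auto simp: phi_def)
  then show ?thesis
    using col_ord_cross_orthogonal[of A B d \<gamma>] col_ord_cross_orthogonal[of B A d \<gamma>] V assms(6)
    by (auto simp: Un_commute)
qed

lemma cross_color_orthogonal:
  assumes V: "A \<union> B \<subseteq> vecs d" and "A \<inter> B = {}" "A \<noteq> {}" "B \<noteq> {}"
    and col: "\<forall>a\<in>A. \<forall>b\<in>B. phi R a b = \<gamma>"
  shows "diffs_orthogonal A B \<and> in_hyperplane_off_origin d B \<or>
         diffs_orthogonal B A \<and> in_hyperplane_off_origin d A"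
proof -
  obtain a0 b0 where "a0 \<in> A" "b0 \<in> B" using assms(3,4) by blast
  have len: "\<forall>x\<in>A \<union> B. length x = d" using V by (auto simp: vecs_def)
  show ?thesis
  proof (cases "\<gamma> \<in> range DOT")
    case True
    then obtain v where "\<gamma> = DOT v" by blast
    then have dot: "\<forall>a\<in>A. \<forall>b\<in>B. dotp a b = v" "v \<noteq> 0"
      using phi_DOT[of _ _ R v] col len \<open>a0 \<in> A\<close> \<open>b0 \<in> B\<close> by (metis UnCI)+
    then have "diffs_orthogonal A B" by (simp add: diffs_orthogonal_def)
    moreover have "in_hyperplane_off_origin d B"
      unfolding in_hyperplane_off_origin_def
      using dot \<open>a0 \<in> A\<close> len dotp_conv_dotn by (metis UnCI)
    ultimately show ?thesis by blast
  next
    case False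
    obtain k where k: "k < d" "\<forall>a\<in>A. a ! k = a0 ! k" "\<forall>b\<in>B. b ! k = b0 ! k"
      "a0 ! k \<noteq> 0" "b0 ! k \<noteq> 0"
      by (rule cross_color_coordinate[OF V assms(2) \<open>a0 \<in> A\<close> \<open>b0 \<in> B\<close> col False]) blast
    have "in_hyperplane_off_origin d A"
      using k len by (intro in_hyperplane_off_origin_coordinate[of k d "a0 ! k"]) auto
    moreover have "in_hyperplane_off_origin d B"
      using k len by (intro in_hyperplane_off_origin_coordinate[of k d "b0 ! k"]) auto
    moreover have "diffs_orthogonal A B \<or> diffs_orthogonal B A"
      by (rule phi_cross_orthogonal[OF V assms(2) \<open>a0 \<in> A\<close> \<open>b0 \<in> B\<close> col False])
    ultimately show ?thesis by blast
  qed
qed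

section \<open>Pinned lists\<close>

fun pinned :: "'a::field rel \<Rightarrow> 'a list list \<Rightarrow> 'a list set \<Rightarrow> bool" where
  "pinned R [] Y \<longleftrightarrow> True"
| "pinned R (x # xs) Y \<longleftrightarrow>
     x \<notin> set xs \<union> Y \<and> (\<exists>\<gamma>. \<forall>z\<in>set xs \<union> Y. phi R x z = \<gamma>) \<and> pinned R xs Y"

lemma pinned_append:
  "pinned R P Y \<Longrightarrow> pinned R L Z \<Longrightarrow> set L \<union> Z \<subseteq> Y \<Longrightarrow> pinned R (P @ L) Z"
proof (induction P)
  case (Cons x P)
  then obtain \<gamma> where "\<forall>z\<in>set P \<union> Y. phi R x z = \<gamma>" by auto
  with Cons show ?case by auto
qed simp

lemma pinned_nth:
  assumes "pinned R L Y" "j < length L"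
  shows "L ! j \<notin> set (drop (Suc j) L)"
    and "\<exists>\<gamma>. \<forall>z\<in>set (drop (Suc j) L). phi R (L ! j) z = \<gamma>"
  using assms by (induction L arbitrary: j) (auto simp: nth_Cons split: nat.splits)

lemma pinned_map_upt:
  assumes "\<forall>i\<in>{m..n}. a i \<notin> Y" "inj_on a {m..n}"
    and "\<forall>i j. m \<le> i \<and> i < j \<and> j \<le> n \<longrightarrow> phi R (a i) (a j) = \<alpha> i"
    and "\<forall>i\<in>{m..n}. \<forall>y\<in>Y. phi R (a i) y = \<alpha> i"
  shows "pinned R (map a [m..<Suc n]) Y"
  using assms
proof (induction "Suc n - m" arbitrary: m)
  case 0
  then show ?case by simp
next
  case (Suc k)
  then have "m \<le> n" by simp
  then have upt: "[m..<Suc n] = m # [Suc m..<Suc n]" by (simp add: upt_conv_Cons)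
  have "inj_on a {Suc m..n}" using Suc.prems(2) by (rule inj_on_subset) auto
  then have "pinned R (map a [Suc m..<Suc n]) Y"
    using Suc.prems Suc.hyps(2) by (intro Suc.hyps(1)) auto
  moreover have "a m \<notin> a ` {Suc m..n}"
  proof
    assume "a m \<in> a ` {Suc m..n}"
    then obtain i where i: "i \<in> {Suc m..n}" "a m = a i" by auto
    then have "m = i" using inj_on_eq_iff[OF Suc.prems(2), of m i] \<open>m \<le> n\<close> by auto
    with i show False by simp
  qed
  ultimately show ?case
    using Suc.prems \<open>m \<le> n\<close>
    by (auto simp: upt atLeastLessThanSuc_atLeastAtMost simp del: upt_Suc intro!: exI[of _ "\<alpha> m"])
qed

definition triangular :: "nat \<Rightarrow> nat \<Rightarrow> (nat \<Rightarrow> nat \<Rightarrow> 'a::field) \<Rightarrow> bool" where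
  "triangular n k pts \<longleftrightarrow>
     (\<forall>j<k. \<exists>g \<beta>. (\<forall>m. j < m \<and> m \<le> k \<longrightarrow> dotn n g (pts m) = \<beta>) \<and> dotn n g (pts j) \<noteq> \<beta>)"

lemma pinned_triangular:
  assumes "pinned R L Y" "set L \<subseteq> vecs d"
  shows "triangular d (length L - 1) (\<lambda>m. vec_of (L ! m))"
  unfolding triangular_def
proof (intro allI impI)
  fix j assume "j < length L - 1"
  define Z where "Z = set (drop (Suc j) L)"
  have "j < length L" using \<open>j < length L - 1\<close> by simp
  then obtain \<gamma> where "\<forall>z\<in>Z. phi R (L ! j) z = \<gamma>"
    using pinned_nth(2)[OF assms(1)] by (auto simp: Z_def)
  moreover have "L ! j \<in> vecs d" "Z \<subseteq> vecs d" "L ! j \<notin> Z"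
    using assms pinned_nth(1)[OF assms(1)] \<open>j < length L - 1\<close>
    by (auto simp: Z_def dest: in_set_dropD)
  ultimately obtain g \<beta> where "\<forall>z\<in>Z. dotn d g (vec_of z) = \<beta>" "dotn d g (vec_of (L ! j)) \<noteq> \<beta>"
    using separating_functional by metis
  moreover have "L ! m \<in> Z" if "j < m" "m \<le> length L - 1" for m
    using that \<open>j < length L - 1\<close> by (auto simp: Z_def in_set_conv_nth intro!: exI[of _ "m - Suc j"])
  ultimately show "\<exists>g \<beta>. (\<forall>m. j < m \<and> m \<le> length L - 1 \<longrightarrow> dotn d g (vec_of (L ! m)) = \<beta>) \<and>
                     dotn d g (vec_of (L ! j)) \<noteq> \<beta>"
    by blast
qed

lemma triangular_diffs_indep:
  assumes "triangular n k pts"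
  shows "lin_indep {..<k} (\<lambda>j i. pts j i - pts k i)"
  unfolding lin_indep_def
proof (intro allI impI)
  fix c assume comb: "\<forall>i. (\<Sum>m\<in>{..<k}. c m * (pts m i - pts k i)) = 0"
  show "\<forall>j\<in>{..<k}. c j = 0"
  proof (rule ccontr)
    assume "\<not> (\<forall>j\<in>{..<k}. c j = 0)"
    then have ex: "\<exists>j. j < k \<and> c j \<noteq> 0" by auto
    define j where "j = (LEAST j. j < k \<and> c j \<noteq> 0)"
    have j: "j < k" "c j \<noteq> 0" using LeastI_ex[OF ex] by (auto simp: j_def)
    have below: "c m = 0" if "m < j" for m
      using not_less_Least[of m "\<lambda>j. j < k \<and> c j \<noteq> 0"] that j by (auto simp: j_def)
    obtain g \<beta> where g: "\<forall>m. j < m \<and> m \<le> k \<longrightarrow> dotn n g (pts m) = \<beta>" "dotn n g (pts j) \<noteq> \<beta>"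
      using assms j(1) unfolding triangular_def by blast
    have "0 = dotn n g (\<lambda>i. \<Sum>m\<in>{..<k}. c m * (pts m i - pts k i))"
      using comb by (simp add: dotn_def)
    also have "\<dots> = (\<Sum>m\<in>{..<k}. c m * (dotn n g (pts m) - dotn n g (pts k)))"
      by (simp add: dotn_sum_right dotn_diff_right)
    also have "\<dots> = (\<Sum>m\<in>{..<k}. if m = j then c j * (dotn n g (pts j) - \<beta>) else 0)"
    proof (rule sum.cong)
      fix m assume "m \<in> {..<k}"
      moreover have "dotn n g (pts k) = \<beta>" using g(1) j(1) by simp
      ultimately show "c m * (dotn n g (pts m) - dotn n g (pts k)) =
          (if m = j then c j * (dotn n g (pts j) - \<beta>) else 0)"
        using below g(1) by (cases m j rule: linorder_cases) auto
    qed simp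
    also have "\<dots> = c j * (dotn n g (pts j) - \<beta>)"
      using j(1) by simp
    finally show False using j(2) g(2) by simp
  qed
qed

lemma triangular_points_indep:
  assumes tri: "triangular n k pts" and hyp: "\<forall>m\<le>k. dotn n h (pts m) = b" "b \<noteq> 0"
  shows "lin_indep {..<Suc k} pts"
  unfolding lin_indep_def
proof (intro allI impI)
  fix c assume comb: "\<forall>i. (\<Sum>j\<in>{..<Suc k}. c j * pts j i) = 0"
  have "0 = dotn n h (\<lambda>i. \<Sum>j\<in>{..<Suc k}. c j * pts j i)"
    using comb by (simp add: dotn_def)
  also have "\<dots> = (\<Sum>j\<in>{..<Suc k}. c j) * b"
    using hyp(1) by (simp add: dotn_sum_right sum_distrib_right del: sum.lessThan_Suc)
  finally have "(\<Sum>j\<in>{..<Suc k}. c j) = 0" using hyp(2) by simp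
  then have ck: "c k = - (\<Sum>j\<in>{..<k}. c j)" by (simp add: eq_neg_iff_add_eq_0 add.commute)
  have "(\<Sum>j\<in>{..<k}. c j * (pts j i - pts k i)) = 0" for i
  proof -
    have "(\<Sum>j\<in>{..<k}. c j * (pts j i - pts k i)) = (\<Sum>j\<in>{..<Suc k}. c j * pts j i)"
      using ck by (simp add: right_diff_distrib sum_subtractf sum_distrib_right)
    with comb show ?thesis by simp
  qed
  then have "\<forall>j\<in>{..<k}. c j = 0"
    using triangular_diffs_indep[OF tri] unfolding lin_indep_def by blast
  moreover from this have "c k = 0" using ck by simp
  ultimately show "\<forall>j\<in>{..<Suc k}. c j = 0" using less_Suc_eq by auto
qed

lemma pinned_points_indep:
  assumes "pinned R L Y" "set L \<subseteq> vecs d" "in_hyperplane_off_origin d (set L)"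
  shows "lin_indep {..<length L} (\<lambda>m. vec_of (L ! m))"
proof (cases "L = []")
  case False
  obtain h b where "b \<noteq> 0" "\<forall>y\<in>set L. dotn d h (vec_of y) = b"
    using assms(3) unfolding in_hyperplane_off_origin_def by blast
  then have "\<forall>m\<le>length L - 1. dotn d h (vec_of (L ! m)) = b"
    using False by (simp add: less_Suc_eq_le[symmetric])
  from triangular_points_indep[OF pinned_triangular[OF assms(1,2)] this \<open>b \<noteq> 0\<close>] False
  show ?thesis by simp
qed simp

lemma pinned_chains_length:
  assumes PX: "pinned R LX Y1" and PY: "pinned R LY Y2" and "LX \<noteq> []"
    and V: "set LX \<union> set LY \<subseteq> vecs d"
    and orth: "diffs_orthogonal (set LX) (set LY)" and hyp: "in_hyperplane_off_origin d (set LY)"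
  shows "length LX + length LY \<le> Suc d"
proof -
  define k where "k = length LX - 1"
  define us where "us = (\<lambda>j i. vec_of (LX ! j) i - vec_of (LX ! k) i)"
  define ws where "ws = (\<lambda>m. vec_of (LY ! m))"
  have "length LX = Suc k" using \<open>LX \<noteq> []\<close> by (cases LX) (simp_all add: k_def)
  then have X: "LX ! j \<in> set LX" if "j \<le> k" for j
    using that by (intro nth_mem) simp
  have len: "length (LX ! j) = d" if "j \<le> k" for j
    using X[OF that] V by (auto simp: vecs_def)
  have lenY: "length (LY ! m) = d" if "m < length LY" for m
    using V that nth_mem by (fastforce simp: vecs_def)
  have "orth_indep d {..<k} us {..<length LY} ws"
    unfolding orth_indep_def
  proof (intro conjI ballI)
    show "lin_indep {..<k} us"
      unfolding us_def k_def using pinned_triangular[OF PX] V by (intro triangular_diffs_indep) auto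
    show "lin_indep {..<length LY} ws"
      unfolding ws_def using PY V hyp by (intro pinned_points_indep) auto
    show "supp_below d (us j)" if "j \<in> {..<k}" for j
      using supp_below_vec_of[of "LX ! j"] supp_below_vec_of[of "LX ! k"] len that
      unfolding us_def by (intro supp_below_diff) auto
    show "supp_below d (ws m)" if "m \<in> {..<length LY}" for m
      using supp_below_vec_of[of "LY ! m"] lenY that by (simp add: ws_def)
    show "dotn d (us j) (ws m) = 0" if "j \<in> {..<k}" "m \<in> {..<length LY}" for j m
      unfolding us_def ws_def using X that
      by (intro diffs_orthogonal_dotn[OF orth V]) auto
  qed simp_all
  then have "k + length LY \<le> d" using orth_indep_card_le by fastforce
  then show ?thesis using \<open>LX \<noteq> []\<close> by (simp add: k_def)
qed

lemma pinned_length: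
  assumes "pinned R L Y" "L \<noteq> []" "set L \<subseteq> vecs d"
  shows "length L \<le> Suc d"
  using pinned_chains_length[of R L Y "[]" "{}"] assms
  by (simp add: diffs_orthogonal_def in_hyperplane_off_origin_empty)

section \<open>Leftover structures\<close>

lemma leftover_finite_nonempty: "leftover R X \<Longrightarrow> finite X \<and> X \<noteq> {}"
  by (induction rule: leftover.induct) (auto simp: card_1_singleton_iff)

text \<open>Since phi is symmetric on distinct vectors, every split can be taken with its smaller
  part first.\<close>

lemma leftover_ordered_induct [consumes 3, case_names single split]:
  assumes "leftover R S" "S \<subseteq> vecs d" "linear_order_on (UNIV - {0}) R"
    and single: "\<And>x. Q {x}"
    and split: "\<And>A B \<gamma>. A \<union> B \<subseteq> vecs d \<Longrightarrow> A \<inter> B = {} \<Longrightarrow> A \<noteq> {} \<Longrightarrow> card A \<le> card B \<Longrightarrow>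
      leftover R A \<Longrightarrow> leftover R B \<Longrightarrow> \<forall>a\<in>A. \<forall>b\<in>B. phi R a b = \<gamma> \<Longrightarrow> Q A \<Longrightarrow> Q B \<Longrightarrow>
      Q (A \<union> B)"
  shows "Q S"
  using assms(1,2)
proof (induction rule: leftover.induct)
  case (single S)
  then show ?case by (auto simp: card_1_singleton_iff intro: assms(4))
next
  case (split S A B \<gamma>)
  then have V: "A \<union> B \<subseteq> vecs d" by simp
  show ?case
  proof (cases "card A \<le> card B")
    case True
    then show ?thesis using split V by (auto intro: assms(5))
  next
    case False
    have "\<forall>b\<in>B. \<forall>a\<in>A. phi R b a = \<gamma>"
      using split.hyps(2,8) V phi_sym[OF assms(3)] by (metis UnCI disjoint_iff subsetD)
    then have "Q (B \<union> A)"
      using False split V by (intro assms(5)[of B A \<gamma>]) auto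
    then show ?thesis using split.hyps(1) by (simp add: Un_commute)
  qed
qed

lemma leftover_pinned_chain:
  assumes "leftover R X" "X \<subseteq> vecs d" "linear_order_on (UNIV - {0}) R"
  shows "\<exists>L. pinned R L {} \<and> L \<noteq> [] \<and> set L \<subseteq> X \<and> card X \<le> 2 ^ (length L - 1)"
  using assms
proof (induction X rule: leftover_ordered_induct)
  case (single x)
  then show ?case by (intro exI[of _ "[x]"]) auto
next
  case (split A B \<gamma>)
  then obtain L where L: "pinned R L {}" "L \<noteq> []" "set L \<subseteq> B" "card B \<le> 2 ^ (length L - 1)"
    by blast
  obtain a where "a \<in> A" using split.hyps(3) by blast
  then have "pinned R (a # L) {}" using L split.hyps(2,7) by (auto intro!: exI[of _ \<gamma>])
  moreover have "card (A \<union> B) \<le> 2 ^ (length (a # L) - 1)"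
  proof -
    have "card (A \<union> B) = card A + card B"
      using split.hyps(2,5,6) leftover_finite_nonempty by (metis card_Un_disjoint)
    also have "\<dots> \<le> 2 * 2 ^ (length L - 1)" using split.hyps(4) L(4) by simp
    also have "\<dots> = 2 ^ (length (a # L) - 1)" using L(2) by (cases L) auto
    finally show ?thesis .
  qed
  ultimately show ?case using L(3) \<open>a \<in> A\<close> by (intro exI[of _ "a # L"]) auto
qed

lemma leftover_pinned_prefix:
  assumes "leftover R B" "B \<subseteq> vecs d" "linear_order_on (UNIV - {0}) R"
    and "pinned R P B" "set P \<subseteq> vecs d"
  shows "\<exists>k. card B \<le> 2 ^ k \<and> k + length P \<le> d"
proof -
  obtain L where L: "pinned R L {}" "L \<noteq> []" "set L \<subseteq> B" "card B \<le> 2 ^ (length L - 1)"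
    using leftover_pinned_chain[OF assms(1-3)] by blast
  have "pinned R (P @ L) {}" using pinned_append[OF assms(4) L(1)] L(3) by simp
  moreover have "set (P @ L) \<subseteq> vecs d" using assms(2,5) L(3) by auto
  ultimately have "length P + length L \<le> Suc d"
    using pinned_length[of R "P @ L" "{}" d] L(2) by simp
  then show ?thesis using L(2,4) by (intro exI[of _ "length L - 1"]) (cases L; auto)
qed

lemma leftover_cross_color_bound:
  assumes R: "linear_order_on (UNIV - {0}) R"
    and lA: "leftover R A" and lB: "leftover R B" and V: "A \<union> B \<subseteq> vecs d"
    and "A \<inter> B = {}" and col: "\<forall>a\<in>A. \<forall>b\<in>B. phi R a b = \<gamma>"
  shows "\<exists>k1 k2. card A \<le> 2 ^ k1 \<and> card B \<le> 2 ^ k2 \<and> k1 + k2 + 1 \<le> d"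
proof -
  have "A \<subseteq> vecs d" "B \<subseteq> vecs d" using V by auto
  obtain LA where LA: "pinned R LA {}" "LA \<noteq> []" "set LA \<subseteq> A" "card A \<le> 2 ^ (length LA - 1)"
    using leftover_pinned_chain[OF lA \<open>A \<subseteq> vecs d\<close> R] by blast
  obtain LB where LB: "pinned R LB {}" "LB \<noteq> []" "set LB \<subseteq> B" "card B \<le> 2 ^ (length LB - 1)"
    using leftover_pinned_chain[OF lB \<open>B \<subseteq> vecs d\<close> R] by blast
  have sub: "set LA \<union> set LB \<subseteq> vecs d" "set LB \<union> set LA \<subseteq> vecs d" using LA(3) LB(3) V by auto
  have "diffs_orthogonal A B \<and> in_hyperplane_off_origin d B \<or>
        diffs_orthogonal B A \<and> in_hyperplane_off_origin d A"
    using cross_color_orthogonal[OF V assms(5) _ _ col] leftover_finite_nonempty lA lB by blast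
  then have "length LA + length LB \<le> Suc d"
  proof
    assume "diffs_orthogonal A B \<and> in_hyperplane_off_origin d B"
    then have "diffs_orthogonal (set LA) (set LB)" "in_hyperplane_off_origin d (set LB)"
      using LA(3) LB(3) diffs_orthogonal_mono in_hyperplane_off_origin_mono by blast+
    then show ?thesis using pinned_chains_length[OF LA(1) LB(1) LA(2) sub(1)] by blast
  next
    assume "diffs_orthogonal B A \<and> in_hyperplane_off_origin d A"
    then have "diffs_orthogonal (set LB) (set LA)" "in_hyperplane_off_origin d (set LA)"
      using LA(3) LB(3) diffs_orthogonal_mono in_hyperplane_off_origin_mono by blast+
    then show ?thesis using pinned_chains_length[OF LB(1) LA(1) LB(2) sub(2)] by simp
  qed
  with LA(2,4) LB(2,4) have "card A \<le> 2 ^ (length LA - 1) \<and> card B \<le> 2 ^ (length LB - 1) \<and>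
      (length LA - 1) + (length LB - 1) + 1 \<le> d"
    by (cases LA; cases LB) auto
  then show ?thesis by blast
qed

text \<open>In splits d T n xs, the entries of xs are the sizes of the parts split off one after another
  from a set of n points that is preceded by T pinned vertices; the conditions are (1)-(3) of the
  theorem with the logarithms replaced by powers of 2.\<close>

fun splits :: "nat \<Rightarrow> nat \<Rightarrow> nat \<Rightarrow> nat list \<Rightarrow> bool" where
  "splits d T n [] \<longleftrightarrow> n = 1"
| "splits d T n (x # xs) \<longleftrightarrow> 1 \<le> x \<and> x \<le> n div 2 \<and>
     (\<exists>k1 k2. x \<le> 2 ^ k1 \<and> n - x \<le> 2 ^ k2 \<and> k1 + k2 + 1 \<le> d) \<and>
     (\<exists>k. n - x \<le> 2 ^ k \<and> k + T + 1 \<le> d) \<and> splits d (Suc T) (n - x) xs"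

lemma leftover_splits:
  assumes "leftover R Y" "Y \<subseteq> vecs d" and R: "linear_order_on (UNIV - {0}) R"
    and "pinned R P Y" "set P \<subseteq> vecs d"
  shows "\<exists>xs. splits d (length P) (card Y) xs"
  using assms
proof (induction Y arbitrary: P rule: leftover_ordered_induct)
  case (single x)
  then show ?case by (intro exI[of _ "[]"]) simp
next
  case (split A B \<gamma>)
  obtain a where "a \<in> A" using split.hyps(3) by blast
  have "pinned R [a] B" using \<open>a \<in> A\<close> split.hyps(2,7) by (auto intro!: exI[of _ \<gamma>])
  then have PB: "pinned R (P @ [a]) B"
    using split.prems(1) \<open>a \<in> A\<close> by (intro pinned_append) auto
  moreover have VP: "set (P @ [a]) \<subseteq> vecs d" using split.prems(2) split.hyps(1) \<open>a \<in> A\<close> by auto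
  ultimately obtain xs where xs: "splits d (Suc (length P)) (card B) xs"
    using split.IH(2) by fastforce
  have "B \<subseteq> vecs d" using split.hyps(1) by simp
  with PB VP have "\<exists>k. card B \<le> 2 ^ k \<and> k + length P + 1 \<le> d"
    using leftover_pinned_prefix[OF split.hyps(6) _ R] by fastforce
  moreover have "\<exists>k1 k2. card A \<le> 2 ^ k1 \<and> card B \<le> 2 ^ k2 \<and> k1 + k2 + 1 \<le> d"
    using leftover_cross_color_bound[OF R split.hyps(5,6,1,2,7)] .
  moreover have "card (A \<union> B) = card A + card B"
    using split.hyps(2,5,6) leftover_finite_nonempty by (metis card_Un_disjoint)
  moreover have "1 \<le> card A"
    using split.hyps(3) leftover_finite_nonempty[OF split.hyps(5)] by (simp add: Suc_le_eq card_gt_0_iff)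
  ultimately have "splits d (length P) (card (A \<union> B)) (card A # xs)"
    using xs split.hyps(4) by auto
  then show ?case by blast
qed

lemma splits_sum_list: "splits d T n xs \<Longrightarrow> sum_list xs + 1 = n"
proof (induction xs arbitrary: T n)
  case (Cons x xs)
  then have "sum_list xs + 1 = n - x" "x \<le> n" using Cons.IH[of "Suc T" "n - x"] by auto
  then show ?case by simp
qed simp

lemma splits_drop:
  "splits d T n xs \<Longrightarrow> i \<le> length xs \<Longrightarrow> splits d (T + i) (n - sum_list (take i xs)) (drop i xs)"
proof (induction xs arbitrary: T n i)
  case (Cons x xs)
  show ?case
  proof (cases i)
    case (Suc j)
    with Cons.prems have "splits d (Suc T + j) (n - x - sum_list (take j xs)) (drop j xs)"
      by (intro Cons.IH) auto
    with Suc show ?thesis by (simp add: diff_diff_left)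
  qed (use Cons.prems in simp)
qed simp

definition admissible :: "nat \<Rightarrow> nat \<Rightarrow> nat \<Rightarrow> nat \<Rightarrow> (nat \<Rightarrow> nat) \<Rightarrow> bool" where
  "admissible d p T t x \<longleftrightarrow>
     (\<forall>i\<in>{1..t}. x i \<ge> 1) \<and> (\<Sum>i\<in>{1..t}. x i) = p - 1 \<and>
     (\<forall>i\<in>{1..t}. let s = (\<Sum>j\<in>{1..<i}. x j) in
        1 \<le> x i \<and> x i \<le> (p - s) div 2 \<and>
        \<lceil>log 2 (real (x i))\<rceil> + \<lceil>log 2 (real p - real s - real (x i))\<rceil> \<le> int d - 1 \<and>
        \<lceil>log 2 (real p - real s - real (x i))\<rceil> \<le> int d - int i - int T)"

lemma ceiling_log2_le: "1 \<le> m \<Longrightarrow> m \<le> 2 ^ k \<Longrightarrow> \<lceil>log 2 (real m)\<rceil> \<le> int k"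
  by (simp add: ceiling_le_iff log2_of_power_le)

lemma splits_Cons_bounds:
  assumes "splits d T n (x # xs)"
  shows "1 \<le> x \<and> x \<le> n div 2 \<and>
    \<lceil>log 2 (real x)\<rceil> + \<lceil>log 2 (real n - real x)\<rceil> \<le> int d - 1 \<and>
    \<lceil>log 2 (real n - real x)\<rceil> \<le> int d - int T - 1"
proof -
  have "1 \<le> n - x" using splits_sum_list[of d "Suc T" "n - x" xs] assms by simp
  then have real_diff: "real n - real x = real (n - x)" by simp
  obtain k1 k2 k where "x \<le> 2 ^ k1" "n - x \<le> 2 ^ k2" "k1 + k2 + 1 \<le> d"
    "n - x \<le> 2 ^ k" "k + T + 1 \<le> d" "1 \<le> x" "x \<le> n div 2"
    using assms by auto
  with \<open>1 \<le> n - x\<close> show ?thesis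
    unfolding real_diff using ceiling_log2_le[of x k1] ceiling_log2_le[of "n - x"] by fastforce
qed

lemma sum_shift_take: "i \<le> length xs \<Longrightarrow> (\<Sum>j\<in>{1..<Suc i}. xs ! (j - 1)) = sum_list (take i xs)"
  by (induction i) (auto simp: take_Suc_conv_app_nth)

lemma splits_admissible:
  assumes "splits d T p xs"
  shows "admissible d p T (length xs) (\<lambda>i. xs ! (i - 1))"
proof -
  have elem: "let s = (\<Sum>j\<in>{1..<i}. xs ! (j - 1)) in
      1 \<le> xs ! (i - 1) \<and> xs ! (i - 1) \<le> (p - s) div 2 \<and>
      \<lceil>log 2 (real (xs ! (i - 1)))\<rceil> + \<lceil>log 2 (real p - real s - real (xs ! (i - 1)))\<rceil> \<le> int d - 1 \<and>
      \<lceil>log 2 (real p - real s - real (xs ! (i - 1)))\<rceil> \<le> int d - int i - int T"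
    if i: "i \<in> {1..length xs}" for i
  proof -
    obtain i' where i': "i = Suc i'" "i' < length xs" using i by (cases i) auto
    define s where "s = sum_list (take i' xs)"
    have "(\<Sum>j\<in>{1..<i}. xs ! (j - 1)) = s" using i' sum_shift_take[of i' xs] by (simp add: s_def)
    moreover have "splits d (T + i') (p - s) (xs ! i' # drop i xs)"
      using splits_drop[OF assms, of i'] i' by (simp add: s_def Cons_nth_drop_Suc)
    moreover have "s \<le> p"
      using splits_sum_list[OF assms] i' sum_list_append[of "take i' xs" "drop i' xs"]
      by (simp add: s_def)
    ultimately show ?thesis
      using splits_Cons_bounds[of d "T + i'" "p - s" "xs ! i'" "drop i xs"] i'
      by (simp add: Let_def of_nat_diff algebra_simps)
  qed
  have "(\<Sum>i\<in>{1..length xs}. xs ! (i - 1)) = p - 1"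
    using sum_shift_take[of "length xs" xs] splits_sum_list[OF assms]
    by (simp add: atLeastLessThanSuc_atLeastAtMost)
  with elem show ?thesis unfolding admissible_def by (auto simp: Let_def)
qed

theorem lemma3p11:
  fixes R :: "'a::{finite,field} rel"
    and d p T :: nat
    and S :: "'a list set"
    and a :: "nat \<Rightarrow> 'a list"
    and \<alpha> :: "nat \<Rightarrow> 'a color"
  assumes "odd (card (UNIV :: 'a set))"
    and "linear_order_on (UNIV - {0}) R"
    and "d \<ge> 1" and "p \<ge> 2"
    and "S \<subseteq> vecs d" and "card S = p"
    and "leftover R S"
    and "\<forall>i\<in>{1..T}. a i \<in> vecs d \<and> a i \<notin> S"
    and "inj_on a {1..T}"
    and "\<forall>i j. 1 \<le> i \<and> i < j \<and> j \<le> T \<longrightarrow> phi R (a i) (a j) = \<alpha> i"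
    and "\<forall>i\<in>{1..T}. \<forall>s\<in>S. phi R (a i) s = \<alpha> i"
  shows "\<exists>(t::nat) (x::nat \<Rightarrow> nat).
           (\<forall>i\<in>{1..t}. x i \<ge> 1) \<and> (\<Sum>i\<in>{1..t}. x i) = p - 1 \<and>
           (\<forall>i\<in>{1..t}. let s = (\<Sum>j\<in>{1..<i}. x j) in
              1 \<le> x i \<and> x i \<le> (p - s) div 2 \<and>
              \<lceil>log 2 (real (x i))\<rceil> + \<lceil>log 2 (real p - real s - real (x i))\<rceil> \<le> int d - 1 \<and>
              \<lceil>log 2 (real p - real s - real (x i))\<rceil> \<le> int d - int i - int T)"
proof -
  let ?P = "map a [1..<Suc T]"
  have "pinned R ?P S"
    by (rule pinned_map_upt) (use assms(8-11) in auto)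
  moreover have "set ?P \<subseteq> vecs d" using assms(8) by auto
  ultimately have "\<exists>xs. splits d (length ?P) (card S) xs"
    by (rule leftover_splits[OF assms(7,5,2)])
  then obtain xs where "splits d T p xs" using assms(6) by (auto simp del: upt_Suc)
  then have "\<exists>t x. admissible d p T t x" using splits_admissible by blast
  then show ?thesis unfolding admissible_def .
qed

end
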